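(* Let $G_c=([n],E_c)$ be a connected undirected graph on the vertex set $[n]=\{1,\dots,n\}$, $n\ge 2$, without self-loops, with symmetric adjacency matrix $A_c=[a_{uv}]$ and degrees $d_v=\sum_{u}a_{uv}\ge 1$. For each $v\in[n]$ let $p_v\in(0,1)$ and $q_v=1-p_v$. For each time $k\ge 1$, let $\tilde A_k=[\tilde a^{(k)}_{uv}]$ be a random matrix with $\tilde a^{(k)}_{uv}=a_{uv}$ with probability $p_v$ and $\tilde a^{(k)}_{uv}=0$ with probability $1-p_v$, where all entries are independent of each other (in particular $\tilde a^{(k)}_{uv}$ and $\tilde a^{(k)}_{vu}$ are independent) and the matrices $\tilde A_1,\tilde A_2,\dots$ are i.i.d. Let $\tilde D_k=\mathrm{diag}(\tilde d^{(k)}_v)$ with $\tilde d^{(k)}_v=\sum_u \tilde a^{(k)}_{uv}$, and let $W_k=(\tilde D_k+I)^{-1}(\tilde A_k+I)^T$. Consider the dynamics $\mathbf{x}(k)=W_k\mathbf{x}(k-1)$, $k\ge1$, with deterministic initial condition $\mathbf{x}(0)\in\mathbb{R}^n$. Then almost surely all coordinates $x_i(k)$ converge to a common random limit $x^*$ (the asymptotic consensus value), and $$\mathbb{E}(x^* )=\sum_{i=1}^n \rho\, w_i\, x_i(0),$$ where $$w_i=\frac{p_i(d_i+1)d_i}{p_i(d_i+1)-1+q_i^{d_i+1}},\qquad \rho=\Big(\sum_{i=1}^n w_i\Big)^{-1}.$$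
   Context: The asymptotic consensus value $x^*$ is the random real number such that $x_i(k)\to x^*$ for all $i$ as $k\to\infty$. The matrix $W_k$ is row-stochastic; its $(v,u)$ entry equals $\tilde a^{(k)}_{uv}/(\tilde d^{(k)}_v+1)$ for $u\neq v$ and $1/(\tilde d^{(k)}_v+1)$ for $u=v$. *)

theory Defs
  imports "HOL-Probability.Probability"
begin

definition adj :: "(nat \<Rightarrow> nat \<Rightarrow> bool) \<Rightarrow> nat \<Rightarrow> nat \<Rightarrow> real" where
  "adj E u v = (if E u v then 1 else 0)"

definition deg :: "nat \<Rightarrow> (nat \<Rightarrow> nat \<Rightarrow> bool) \<Rightarrow> nat \<Rightarrow> nat" where
  "deg n E v = card {u \<in> {1..n}. E u v}"

definition connected_graph :: "nat \<Rightarrow> (nat \<Rightarrow> nat \<Rightarrow> bool) \<Rightarrow> bool" where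
  "connected_graph n E \<longleftrightarrow>
     (\<forall>u\<in>{1..n}. \<forall>v\<in>{1..n}. (u, v) \<in> {(x, y). x \<in> {1..n} \<and> y \<in> {1..n} \<and> E x y}\<^sup>*)"

text \<open>random degree tilde d^(k)_v = sum_u tilde a^(k)_uv; At k u v \<omega> is the entry tilde a^(k)_uv\<close>
definition rand_deg :: "nat \<Rightarrow> (nat \<Rightarrow> nat \<Rightarrow> nat \<Rightarrow> 'a \<Rightarrow> real) \<Rightarrow> nat \<Rightarrow> 'a \<Rightarrow> nat \<Rightarrow> real" where
  "rand_deg n At k \<omega> v = (\<Sum>u\<in>{1..n}. At k u v \<omega>)"

text \<open>(v,u) entry of W_k = (tilde D_k + I)^{-1} (tilde A_k + I)^T\<close>
definition Wmat :: "nat \<Rightarrow> (nat \<Rightarrow> nat \<Rightarrow> nat \<Rightarrow> 'a \<Rightarrow> real) \<Rightarrow> nat \<Rightarrow> 'a \<Rightarrow> nat \<Rightarrow> nat \<Rightarrow> real" where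
  "Wmat n At k \<omega> v u = (At k u v \<omega> + (if u = v then 1 else 0)) / (rand_deg n At k \<omega> v + 1)"

fun cstate :: "nat \<Rightarrow> (nat \<Rightarrow> nat \<Rightarrow> nat \<Rightarrow> 'a \<Rightarrow> real) \<Rightarrow> (nat \<Rightarrow> real) \<Rightarrow> nat \<Rightarrow> 'a \<Rightarrow> nat \<Rightarrow> real" where
  "cstate n At x0 0 \<omega> = x0"
| "cstate n At x0 (Suc k) \<omega> = (\<lambda>v. \<Sum>u\<in>{1..n}. Wmat n At (Suc k) \<omega> v u * cstate n At x0 k \<omega> u)"

definition weight :: "nat \<Rightarrow> (nat \<Rightarrow> nat \<Rightarrow> bool) \<Rightarrow> (nat \<Rightarrow> real) \<Rightarrow> nat \<Rightarrow> real" where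
  "weight n E p i = (let d = deg n E i in
     p i * (real d + 1) * real d / (p i * (real d + 1) - 1 + (1 - p i) ^ (d + 1)))"

definition rho :: "nat \<Rightarrow> (nat \<Rightarrow> nat \<Rightarrow> bool) \<Rightarrow> (nat \<Rightarrow> real) \<Rightarrow> real" where
  "rho n E p = inverse (\<Sum>i\<in>{1..n}. weight n E p i)"

end

theory Submission
  imports Defs
begin

text \<open>
  Outside a null set every random entry is 0 or 1 and vanishes off the edges. There every
  W_k is row-stochastic with self-weights at least 1/(n+1), so the spread max x(k) - min x(k)
  never increases. During a window of L rounds in which all edges are present, L bounding
  all graph distances, every edge weight is at least 1/(n+1) as well, and the spread shrinks
  by the factor 1 - 2(n+1)^(-L). Such a window occurs with probability bounded below
  independently of the past, so the expected spread decays geometrically, the spread tends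
  to 0 almost surely and all coordinates converge to a common limit.

  For the expectation: W_(k+1) is independent of x(k), so E x(k+1) = W' E x(k) with
  W' = E W_k. The diagonal entries of W' are E[1/(B+1)] for a binomial B and have a closed
  form; the off-diagonal edge entries of a row are equal and hence fixed by the row sum.
  This makes \<rho> w a left eigenvector of W', so \<rho> w \<cdot> E x(k) is constant, and dominated
  convergence carries this to E x*.
\<close>

subsection \<open>Averaging with row-stochastic weights\<close>

lemma convex_combination_le:
  fixes w y :: "'i \<Rightarrow> real"
  assumes "finite S" "\<forall>u\<in>S. 0 \<le> w u" "(\<Sum>u\<in>S. w u) = 1" "\<forall>u\<in>S. y u \<le> b"
  shows "(\<Sum>u\<in>S. w u * y u) \<le> b"
proof -
  have "(\<Sum>u\<in>S. w u * y u) \<le> (\<Sum>u\<in>S. w u * b)"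
    using assms by (intro sum_mono mult_left_mono) auto
  also have "\<dots> = b" using assms(3) by (simp add: sum_distrib_right[symmetric])
  finally show ?thesis .
qed

lemma convex_combination_ge:
  fixes w y :: "'i \<Rightarrow> real"
  assumes "finite S" "\<forall>u\<in>S. 0 \<le> w u" "(\<Sum>u\<in>S. w u) = 1" "\<forall>u\<in>S. a \<le> y u"
  shows "a \<le> (\<Sum>u\<in>S. w u * y u)"
  using convex_combination_le[of S w "\<lambda>u. - y u" "- a"] assms
  by (simp add: sum_negf)

lemma convex_combination_le_deficit:
  fixes w y :: "'i \<Rightarrow> real"
  assumes "finite S" "\<forall>u\<in>S. 0 \<le> w u" "(\<Sum>u\<in>S. w u) = 1" "\<forall>u\<in>S. y u \<le> b" "x \<in> S"
  shows "(\<Sum>u\<in>S. w u * y u) \<le> b - w x * (b - y x)"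
proof -
  have "b - (\<Sum>u\<in>S. w u * y u) = (\<Sum>u\<in>S. w u * (b - y u))"
    using assms(3) by (simp add: sum_subtractf right_diff_distrib sum_distrib_right[symmetric])
  also have "\<dots> \<ge> w x * (b - y x)"
    using assms by (intro member_le_sum) auto
  finally show ?thesis by simp
qed

text \<open>
  Weight at least c along an R-edge passes the deficit below b on, losing a factor c; the
  diagonal weight keeps it at vertices already reached.
\<close>
lemma averaging_propagates_deficit:
  fixes W :: "nat \<Rightarrow> 'i \<Rightarrow> 'i \<Rightarrow> real" and y :: "nat \<Rightarrow> 'i \<Rightarrow> real"
  assumes fin: "finite S" and W_nonneg: "\<forall>t<L. \<forall>v\<in>S. \<forall>u\<in>S. 0 \<le> W t v u"
    and W_row: "\<forall>t<L. \<forall>v\<in>S. (\<Sum>u\<in>S. W t v u) = 1"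
    and W_diag: "\<forall>t<L. \<forall>v\<in>S. c \<le> W t v v"
    and W_R: "\<forall>t<L. \<forall>w v. (w, v) \<in> R \<longrightarrow> c \<le> W t v w"
    and R: "R \<subseteq> S \<times> S"
    and y_Suc: "\<forall>t<L. \<forall>v\<in>S. y (Suc t) v = (\<Sum>u\<in>S. W t v u * y t u)"
    and y0: "\<forall>u\<in>S. y 0 u \<le> b" and u0: "u0 \<in> S" and c: "0 \<le> c"
  shows "t \<le> L \<Longrightarrow> (\<forall>v\<in>S. y t v \<le> b) \<and>
     (\<forall>v\<in>S. (\<exists>s\<le>t. (u0, v) \<in> R ^^ s) \<longrightarrow> y t v \<le> b - c ^ t * (b - y 0 u0))"
proof (induction t)
  case 0
  have "\<And>v. (u0, v) \<in> R ^^ 0 \<Longrightarrow> v = u0" by simp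
  then show ?case using y0 by auto
next
  case (Suc t)
  then have tL: "t < L" and IH_bound: "\<forall>v\<in>S. y t v \<le> b"
    and IH_reach: "\<forall>v\<in>S. (\<exists>s\<le>t. (u0, v) \<in> R ^^ s) \<longrightarrow> y t v \<le> b - c ^ t * (b - y 0 u0)"
    by auto
  have deficit: "0 \<le> b - y 0 u0" using y0 u0 by auto
  have via: "y (Suc t) v \<le> b - c ^ Suc t * (b - y 0 u0)"
    if "v \<in> S" "x \<in> S" "c \<le> W t v x" "y t x \<le> b - c ^ t * (b - y 0 u0)" for v x
  proof -
    have "y (Suc t) v \<le> b - W t v x * (b - y t x)"
      using y_Suc tL that W_nonneg W_row IH_bound fin by (auto intro!: convex_combination_le_deficit)
    moreover have "c * (c ^ t * (b - y 0 u0)) \<le> W t v x * (b - y t x)"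
      using that c deficit by (intro mult_mono) auto
    ultimately show ?thesis by simp
  qed
  have "\<forall>v\<in>S. y (Suc t) v \<le> b"
    using y_Suc tL W_nonneg W_row IH_bound fin by (auto intro!: convex_combination_le)
  moreover have "y (Suc t) v \<le> b - c ^ Suc t * (b - y 0 u0)"
    if v: "v \<in> S" and s: "s \<le> Suc t" "(u0, v) \<in> R ^^ s" for v s
  proof (cases "s \<le> t")
    case True
    then show ?thesis using via[of v v] v s IH_reach W_diag tL by auto
  next
    case False
    then have "(u0, v) \<in> R ^^ t O R" using s by (simp add: le_Suc_eq)
    then obtain x where x: "(u0, x) \<in> R ^^ t" "(x, v) \<in> R" by auto
    then have "x \<in> S" using R by auto
    then show ?thesis using via[of v x] v x IH_reach W_R tL by auto
  qed
  ultimately show ?case by blast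
qed

lemma averaging_contracts_range:
  fixes W :: "nat \<Rightarrow> 'i \<Rightarrow> 'i \<Rightarrow> real" and y :: "nat \<Rightarrow> 'i \<Rightarrow> real"
  assumes fin: "finite S" and ne: "S \<noteq> {}"
    and W_nonneg: "\<forall>t<L. \<forall>v\<in>S. \<forall>u\<in>S. 0 \<le> W t v u"
    and W_row: "\<forall>t<L. \<forall>v\<in>S. (\<Sum>u\<in>S. W t v u) = 1"
    and W_diag: "\<forall>t<L. \<forall>v\<in>S. c \<le> W t v v"
    and W_R: "\<forall>t<L. \<forall>w v. (w, v) \<in> R \<longrightarrow> c \<le> W t v w"
    and R: "R \<subseteq> S \<times> S"
    and y_Suc: "\<forall>t<L. \<forall>v\<in>S. y (Suc t) v = (\<Sum>u\<in>S. W t v u * y t u)"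
    and c: "0 \<le> c"
    and reach: "\<forall>u\<in>S. \<forall>v\<in>S. \<exists>s\<le>L. (u, v) \<in> R ^^ s"
    and v: "v \<in> S"
  shows "y L v \<le> Max (y 0 ` S) - c ^ L * (Max (y 0 ` S) - Min (y 0 ` S))"
    and "Min (y 0 ` S) + c ^ L * (Max (y 0 ` S) - Min (y 0 ` S)) \<le> y L v"
proof -
  let ?a = "Min (y 0 ` S)" and ?b = "Max (y 0 ` S)"
  have "?a \<in> y 0 ` S" using fin ne by (intro Min_in) auto
  then obtain u0 where u0: "u0 \<in> S" "y 0 u0 = ?a" by (metis imageE)
  have "?b \<in> y 0 ` S" using fin ne by (intro Max_in) auto
  then obtain u1 where u1: "u1 \<in> S" "y 0 u1 = ?b" by (metis imageE)
  have "y L v \<le> ?b - c ^ L * (?b - y 0 u0)"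
    using averaging_propagates_deficit[OF fin W_nonneg W_row W_diag W_R R y_Suc _ u0(1) c, of ?b L]
      fin reach u0 v by auto
  then show "y L v \<le> ?b - c ^ L * (?b - ?a)" using u0 by simp
  have y_Suc': "\<forall>t<L. \<forall>v\<in>S. - y (Suc t) v = (\<Sum>u\<in>S. W t v u * - y t u)"
    using y_Suc by (simp add: sum_negf[symmetric])
  have "- y L v \<le> - ?a - c ^ L * (- ?a - - y 0 u1)"
    using averaging_propagates_deficit[OF fin W_nonneg W_row W_diag W_R R, of "\<lambda>t v. - y t v",
        OF y_Suc' _ u1(1) c, of "- ?a" L] fin reach u1 v by auto
  then show "?a + c ^ L * (?b - ?a) \<le> y L v" using u1 by (simp add: algebra_simps)
qed

subsection \<open>Binomial means\<close>

definition binomial_mean :: "nat \<Rightarrow> real \<Rightarrow> (real \<Rightarrow> real) \<Rightarrow> real" where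
  "binomial_mean m q f = (\<Sum>i\<le>m. real (m choose i) * q ^ i * (1 - q) ^ (m - i) * f (real i))"

lemma binomial_mean_0: "binomial_mean 0 q f = f 0" by (simp add: binomial_mean_def)

lemma binomial_mean_Suc: "binomial_mean (Suc m) q f = q * binomial_mean m q (\<lambda>x. f (x + 1)) + (1 - q) * binomial_mean m q f"
proof -
  let ?r = "1 - q"
  let ?S1 = "(\<Sum>i\<le>m. real (m choose i) * q ^ Suc i * ?r ^ (m - i) * f (real (Suc i)))"
  let ?S2 = "(\<Sum>i\<le>m. real (m choose Suc i) * q ^ Suc i * ?r ^ (m - i) * f (real (Suc i)))"
  have h0: "binomial_mean (Suc m) q f = ?r ^ Suc m * f 0 + (\<Sum>i\<le>m. real (Suc m choose Suc i) * q ^ Suc i * ?r ^ (m - i) * f (real (Suc i)))"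
    unfolding binomial_mean_def by (subst sum.atMost_Suc_shift) simp
  have h1: "(\<Sum>i\<le>m. real (Suc m choose Suc i) * q ^ Suc i * ?r ^ (m - i) * f (real (Suc i))) = ?S1 + ?S2"
    by (simp add: sum.distrib[symmetric] algebra_simps)
  have h2: "?S1 = q * binomial_mean m q (\<lambda>x. f (x + 1))"
    unfolding binomial_mean_def by (simp add: sum_distrib_left algebra_simps)
  have h3: "?r ^ Suc m * f 0 + ?S2 = ?r * binomial_mean m q f"
  proof -
    have "?r * binomial_mean m q f = (\<Sum>i\<le>m. real (m choose i) * q ^ i * ?r ^ (Suc m - i) * f (real i))"
      unfolding binomial_mean_def by (simp add: sum_distrib_left algebra_simps Suc_diff_le)
    also have "\<dots> = (\<Sum>i\<le>Suc m. real (m choose i) * q ^ i * ?r ^ (Suc m - i) * f (real i))"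
      by simp
    also have "\<dots> = ?r ^ Suc m * f 0 + ?S2"
      by (subst sum.atMost_Suc_shift) simp
    finally show ?thesis by simp
  qed
  show ?thesis using h0 h1 h2 h3 by simp
qed

lemma binomial_mean_inverse_Suc:
  assumes "0 < q"
  shows "binomial_mean m q (\<lambda>x. 1 / (x + 1)) = (1 - (1 - q) ^ (m + 1)) / ((real m + 1) * q)"
proof -
  let ?r = "1 - q"
  have c: "real (m choose i) * (real m + 1) = real (Suc m choose Suc i) * (real i + 1)" for i
  proof -
    have "real (Suc m choose Suc i) * real (Suc i) = real (Suc m) * real (m choose i)"
      using Suc_times_binomial_eq[of m i] by (metis of_nat_mult)
    then show ?thesis by (simp add: algebra_simps)
  qed
  have t: "real (m choose i) * q ^ i * ?r ^ (m - i) * (1 / (real i + 1)) = real (Suc m choose Suc i) * q ^ i * ?r ^ (m - i) / (real m + 1)" for i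
  proof -
    have nz: "real i + 1 \<noteq> 0" "real m + 1 \<noteq> 0" by (simp_all add: add_nonneg_eq_0_iff)
    let ?x = "q ^ i * ?r ^ (m - i)"
    have e: "(real (m choose i) * ?x) * (real m + 1) = (real (Suc m choose Suc i) * ?x) * (real i + 1)"
      using c[of i] by (metis mult.commute mult.left_commute)
    have "real (m choose i) * q ^ i * ?r ^ (m - i) * (1 / (real i + 1)) = (real (m choose i) * ?x) / (real i + 1)"
      by (simp add: mult.assoc)
    also have "\<dots> = (real (Suc m choose Suc i) * ?x) / (real m + 1)"
      using nz e by (simp add: frac_eq_eq)
    finally show ?thesis by (simp add: mult.assoc)
  qed
  let ?S = "(\<Sum>i\<le>m. real (Suc m choose Suc i) * q ^ i * ?r ^ (m - i))"
  have B: "binomial_mean m q (\<lambda>x. 1 / (x + 1)) = ?S / (real m + 1)"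
    unfolding binomial_mean_def sum_divide_distrib
    by (intro sum.cong refl t)
  have "?S * q = (\<Sum>i\<le>m. real (Suc m choose Suc i) * q ^ Suc i * ?r ^ (Suc m - Suc i))"
    by (simp add: sum_distrib_right sum_distrib_left algebra_simps del: binomial_Suc_Suc)
  also have "\<dots> = (q + ?r) ^ Suc m - ?r ^ Suc m"
    unfolding binomial_ring[of q ?r "Suc m"] by (subst sum.atMost_Suc_shift) (simp del: binomial_Suc_Suc)
  finally have "?S * q = 1 - ?r ^ Suc m" by simp
  then have S: "?S = (1 - ?r ^ Suc m) / q"
    using assms by (simp add: field_simps del: binomial_Suc_Suc)
  have "binomial_mean m q (\<lambda>x. 1 / (x + 1)) = ((1 - ?r ^ Suc m) / q) / (real m + 1)"
    unfolding B S ..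
  then show ?thesis by (simp add: divide_divide_eq_left mult.commute)
qed

subsection \<open>The random consensus model\<close>

locale random_consensus = prob_space M for M :: "'a measure" +
  fixes n :: nat and E :: "nat \<Rightarrow> nat \<Rightarrow> bool" and p :: "nat \<Rightarrow> real"
    and At :: "nat \<Rightarrow> nat \<Rightarrow> nat \<Rightarrow> 'a \<Rightarrow> real" and x0 :: "nat \<Rightarrow> real"
  assumes n2: "n \<ge> 2"
    and sym: "\<forall>u\<in>{1..n}. \<forall>v\<in>{1..n}. E u v = E v u"
    and noloop: "\<forall>v. \<not> E v v"
    and conn: "connected_graph n E"
    and degpos: "\<forall>v\<in>{1..n}. deg n E v \<ge> 1"
    and prange: "\<forall>v\<in>{1..n}. 0 < p v \<and> p v < 1"
    and indep: "indep_vars (\<lambda>_. borel) (\<lambda>(k, u, v). At k u v)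
                  {(k, u, v). k \<ge> 1 \<and> u \<in> {1..n} \<and> v \<in> {1..n}}"
    and dist_edge: "\<forall>k\<ge>1. \<forall>u\<in>{1..n}. \<forall>v\<in>{1..n}. E u v \<longrightarrow>
                  measure M {\<omega> \<in> space M. At k u v \<omega> = adj E u v} = p v \<and>
                  measure M {\<omega> \<in> space M. At k u v \<omega> = 0} = 1 - p v"
    and dist_nonedge: "\<forall>k\<ge>1. \<forall>u\<in>{1..n}. \<forall>v\<in>{1..n}. \<not> E u v \<longrightarrow>
                  measure M {\<omega> \<in> space M. At k u v \<omega> = 0} = 1"
begin

abbreviation "N \<equiv> {1..n}"
abbreviation "entry \<equiv> (\<lambda>(k, u, v). At k u v)"
abbreviation "entries \<equiv> {(k, u, v). k \<ge> 1 \<and> u \<in> {1..n} \<and> v \<in> {1..n}}"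
abbreviation "state k \<omega> \<equiv> cstate n At x0 k \<omega>"

lemma vertices_nonempty: "N \<noteq> {}" using n2 by auto
lemma one_vertex: "1 \<in> N" using n2 by auto

lemma At_measurable[measurable]:
  assumes "k \<ge> 1" "u \<in> N" "v \<in> N" shows "At k u v \<in> borel_measurable M"
proof -
  have "entry (k, u, v) \<in> borel_measurable M"
    using indep assms unfolding indep_vars_def by auto
  then show ?thesis by simp
qed

definition "good = {\<omega>. \<forall>k\<ge>1. \<forall>u\<in>N. \<forall>v\<in>N.
   (At k u v \<omega> = 0 \<or> At k u v \<omega> = 1) \<and> (\<not> E u v \<longrightarrow> At k u v \<omega> = 0)}"

lemma goodD: "\<omega> \<in> good \<Longrightarrow> k \<ge> 1 \<Longrightarrow> u \<in> N \<Longrightarrow> v \<in> N \<Longrightarrow>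
   (At k u v \<omega> = 0 \<or> At k u v \<omega> = 1) \<and> (\<not> E u v \<longrightarrow> At k u v \<omega> = 0)"
  unfolding good_def by blast

lemma AE_entry_values:
  assumes "k \<ge> 1" "u \<in> N" "v \<in> N"
  shows "AE \<omega> in M. (At k u v \<omega> = 0 \<or> At k u v \<omega> = 1) \<and> (\<not> E u v \<longrightarrow> At k u v \<omega> = 0)"
proof (cases "E u v")
  case True
  let ?S1 = "{\<omega> \<in> space M. At k u v \<omega> = 1}" and ?S0 = "{\<omega> \<in> space M. At k u v \<omega> = 0}"
  have events: "?S1 \<in> events" "?S0 \<in> events" using assms by measurable
  have "prob ?S1 = p v" "prob ?S0 = 1 - p v"
    using dist_edge assms True by (auto simp: adj_def)
  moreover have "prob (?S1 \<union> ?S0) = prob ?S1 + prob ?S0"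
    using events by (intro finite_measure_Union) auto
  ultimately have "prob (?S1 \<union> ?S0) = 1" by simp
  then have "AE \<omega> in M. \<omega> \<in> ?S1 \<union> ?S0" by (rule AE_prob_1)
  then show ?thesis by (rule eventually_mono) (use True in auto)
next
  case False
  have "prob {\<omega> \<in> space M. At k u v \<omega> = 0} = 1" using dist_nonedge assms False by auto
  then have "AE \<omega> in M. \<omega> \<in> {\<omega> \<in> space M. At k u v \<omega> = 0}" by (rule AE_prob_1)
  then show ?thesis by (rule eventually_mono) auto
qed

lemma AE_good: "AE \<omega> in M. \<omega> \<in> good"
proof -
  have "AE \<omega> in M. k \<ge> 1 \<longrightarrow> (\<forall>u\<in>N. \<forall>v\<in>N.
      (At k u v \<omega> = 0 \<or> At k u v \<omega> = 1) \<and> (\<not> E u v \<longrightarrow> At k u v \<omega> = 0))" for k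
    by (cases "k \<ge> 1") (auto intro!: eventually_ball_finite AE_entry_values)
  then have "AE \<omega> in M. \<forall>k. k \<ge> 1 \<longrightarrow> (\<forall>u\<in>N. \<forall>v\<in>N.
      (At k u v \<omega> = 0 \<or> At k u v \<omega> = 1) \<and> (\<not> E u v \<longrightarrow> At k u v \<omega> = 0))"
    by (subst AE_all_countable) blast
  then show ?thesis unfolding good_def by (rule eventually_mono) auto
qed

lemma entry_nonneg: "\<omega> \<in> good \<Longrightarrow> k \<ge> 1 \<Longrightarrow> u \<in> N \<Longrightarrow> v \<in> N \<Longrightarrow> 0 \<le> At k u v \<omega>"
  using goodD by fastforce

lemma diagonal_entry_zero: "\<omega> \<in> good \<Longrightarrow> k \<ge> 1 \<Longrightarrow> v \<in> N \<Longrightarrow> At k v v \<omega> = 0"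
  using goodD noloop by blast

lemma rand_deg_bounds:
  assumes "\<omega> \<in> good" "k \<ge> 1" "v \<in> N"
  shows "0 \<le> rand_deg n At k \<omega> v" "rand_deg n At k \<omega> v \<le> n"
proof -
  have entry_01: "0 \<le> At k u v \<omega> \<and> At k u v \<omega> \<le> 1" if "u \<in> N" for u
    using goodD[OF assms(1,2) that assms(3)] by fastforce
  show "0 \<le> rand_deg n At k \<omega> v" unfolding rand_deg_def using entry_01 by (intro sum_nonneg) auto
  have "rand_deg n At k \<omega> v \<le> (\<Sum>u\<in>N. 1)" unfolding rand_deg_def using entry_01 by (intro sum_mono) auto
  then show "rand_deg n At k \<omega> v \<le> n" by simp
qed

lemma Wmat_nonneg:
  assumes "\<omega> \<in> good" "k \<ge> 1" "v \<in> N" "u \<in> N"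
  shows "0 \<le> Wmat n At k \<omega> v u"
  unfolding Wmat_def using rand_deg_bounds[OF assms(1-3)] entry_nonneg[OF assms(1,2,4,3)] by auto

lemma Wmat_lower_bound:
  assumes "\<omega> \<in> good" "k \<ge> 1" "v \<in> N" "u \<in> N"
  shows "(At k u v \<omega> + (if u = v then 1 else 0)) / (real n + 1) \<le> Wmat n At k \<omega> v u"
  unfolding Wmat_def using rand_deg_bounds[OF assms(1-3)] entry_nonneg[OF assms(1,2,4,3)]
  by (intro divide_left_mono) auto

lemma Wmat_row_sum:
  assumes "\<omega> \<in> good" "k \<ge> 1" "v \<in> N"
  shows "(\<Sum>u\<in>N. Wmat n At k \<omega> v u) = 1"
proof -
  have "(\<Sum>u\<in>N. At k u v \<omega> + (if u = v then 1 else 0)) = rand_deg n At k \<omega> v + 1"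
    using assms(3) by (simp add: sum.distrib rand_deg_def)
  moreover have "rand_deg n At k \<omega> v + 1 > 0" using rand_deg_bounds[OF assms] by auto
  ultimately show ?thesis unfolding Wmat_def by (simp add: sum_divide_distrib[symmetric])
qed

lemma Wmat_le_1:
  assumes "\<omega> \<in> good" "k \<ge> 1" "v \<in> N" "u \<in> N"
  shows "Wmat n At k \<omega> v u \<le> 1"
proof -
  have "Wmat n At k \<omega> v u \<le> (\<Sum>u'\<in>N. Wmat n At k \<omega> v u')"
    using assms Wmat_nonneg[OF assms(1-3)] by (intro member_le_sum) auto
  then show ?thesis using Wmat_row_sum[OF assms(1-3)] by simp
qed

lemma Wmat_measurable[measurable]:
  assumes "k \<ge> 1" "v \<in> N" "u \<in> N"
  shows "(\<lambda>\<omega>. Wmat n At k \<omega> v u) \<in> borel_measurable M"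
  unfolding Wmat_def rand_deg_def using assms by measurable

lemma integrable_Wmat:
  assumes "k \<ge> 1" "v \<in> N" "u \<in> N"
  shows "integrable M (\<lambda>\<omega>. Wmat n At k \<omega> v u)"
proof (rule integrable_const_bound[where B=1])
  show "AE \<omega> in M. norm (Wmat n At k \<omega> v u) \<le> 1"
    using AE_good by (rule eventually_mono) (use assms Wmat_nonneg Wmat_le_1 in auto)
qed (use assms in simp)

lemma state_Suc: "state (Suc k) \<omega> v = (\<Sum>u\<in>N. Wmat n At (Suc k) \<omega> v u * state k \<omega> u)"
  by simp

lemma state_bounds:
  assumes "\<omega> \<in> good" "i \<in> N"
  shows "Min (x0 ` N) \<le> state k \<omega> i \<and> state k \<omega> i \<le> Max (x0 ` N)"
  using assms(2)
proof (induction k arbitrary: i)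
  case 0 then show ?case by simp
next
  case (Suc k)
  have "Min (x0 ` N) \<le> (\<Sum>u\<in>N. Wmat n At (Suc k) \<omega> i u * state k \<omega> u)"
    using Suc Wmat_nonneg Wmat_row_sum assms(1) by (intro convex_combination_ge) auto
  moreover have "(\<Sum>u\<in>N. Wmat n At (Suc k) \<omega> i u * state k \<omega> u) \<le> Max (x0 ` N)"
    using Suc Wmat_nonneg Wmat_row_sum assms(1) by (intro convex_combination_le) auto
  ultimately show ?case by (simp only: state_Suc)
qed

lemma state_abs_bound:
  assumes "\<omega> \<in> good" "i \<in> N"
  shows "\<bar>state k \<omega> i\<bar> \<le> (\<Sum>j\<in>N. \<bar>x0 j\<bar>)"
proof -
  obtain a where a: "a \<in> N" "x0 a = Min (x0 ` N)"
    using Min_in[of "x0 ` N"] vertices_nonempty by (metis finite_atLeastAtMost finite_imageI image_iff image_is_empty)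
  obtain b where b: "b \<in> N" "x0 b = Max (x0 ` N)"
    using Max_in[of "x0 ` N"] vertices_nonempty by (metis finite_atLeastAtMost finite_imageI image_iff image_is_empty)
  have "\<bar>x0 a\<bar> \<le> (\<Sum>j\<in>N. \<bar>x0 j\<bar>)" "\<bar>x0 b\<bar> \<le> (\<Sum>j\<in>N. \<bar>x0 j\<bar>)"
    using a(1) b(1) by (auto intro!: member_le_sum simp del: atLeastAtMost_iff)
  then show ?thesis using state_bounds[OF assms, of k] a b by auto
qed

text \<open>
  A function of the entries indexed by K factors as a measurable map on PiM K composed with
  observe K; sample_of turns a point of PiM K back into an entry array over a one-point
  sample space, on which cstate can be evaluated.
\<close>
definition "observe K \<omega> = restrict (\<lambda>i. entry i \<omega>) K"
definition "sample_of f = (\<lambda>k u v (_::unit). f (k, u, v))"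
definition "history k = {(j, u, v). 1 \<le> j \<and> j \<le> k \<and> u \<in> N \<and> v \<in> N}"

lemma history_subset_entries: "history k \<subseteq> entries" unfolding history_def by auto

lemma observe_measurable[measurable]:
  "K \<subseteq> entries \<Longrightarrow> observe K \<in> measurable M (PiM K (\<lambda>_. borel))"
  unfolding observe_def using indep unfolding indep_vars_def by (auto intro!: measurable_restrict)

lemma indep_var_observe:
  assumes "A \<inter> B = {}" "A \<subseteq> entries" "B \<subseteq> entries"
    and F: "F \<in> borel_measurable (PiM A (\<lambda>_. borel))"
    and G: "G \<in> borel_measurable (PiM B (\<lambda>_. borel))"
  shows "indep_var borel (\<lambda>\<omega>. F (observe A \<omega>)) borel (\<lambda>\<omega>. G (observe B \<omega>))"
  using indep_var_compose[OF indep_var_restrict[OF indep assms(1-3)] F G]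
  by (simp add: comp_def observe_def)

lemma cstate_cong:
  assumes "\<forall>j\<in>{1..k}. \<forall>u\<in>N. \<forall>v\<in>N. At' j u v \<omega>' = At'' j u v \<omega>''"
  shows "\<forall>i\<in>N. cstate n At' x0 k \<omega>' i = cstate n At'' x0 k \<omega>'' i"
  using assms
proof (induction k)
  case 0 then show ?case by simp
next
  case (Suc k)
  then have IH: "\<forall>i\<in>N. cstate n At' x0 k \<omega>' i = cstate n At'' x0 k \<omega>'' i" by auto
  have "Wmat n At' (Suc k) \<omega>' v u = Wmat n At'' (Suc k) \<omega>'' v u" if "u \<in> N" "v \<in> N" for u v
    using Suc.prems that unfolding Wmat_def rand_deg_def by (auto intro!: sum.cong)
  then show ?case using IH by (auto intro!: sum.cong)
qed

lemma state_observe: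
  assumes "history k \<subseteq> K" "i \<in> N"
  shows "state k \<omega> i = cstate n (sample_of (observe K \<omega>)) x0 k () i"
  using cstate_cong[of k At \<omega> "sample_of (observe K \<omega>)" "()"] assms
  by (auto simp: sample_of_def observe_def history_def subset_iff)

lemma cstate_sample_of_measurable:
  assumes "history k \<subseteq> K" "i \<in> N"
  shows "(\<lambda>f. cstate n (sample_of f) x0 k () i) \<in> borel_measurable (PiM K (\<lambda>_. borel))"
  using assms
proof (induction k arbitrary: i)
  case 0 then show ?case by simp
next
  case (Suc k)
  have history: "history k \<subseteq> K" using Suc.prems unfolding history_def by auto
  have "(Suc k, u, v) \<in> K" if "u \<in> N" "v \<in> N" for u v
    using Suc.prems that unfolding history_def by auto
  then have "(\<lambda>f. Wmat n (sample_of f) (Suc k) () i u) \<in> borel_measurable (PiM K (\<lambda>_. borel))"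
    if "u \<in> N" for u
    unfolding Wmat_def rand_deg_def sample_of_def using that Suc.prems by measurable
  then show ?case
    using Suc.IH[OF history] by (simp del: atLeastAtMost_iff) measurable
qed

lemma state_measurable[measurable]:
  assumes "i \<in> N" shows "(\<lambda>\<omega>. state k \<omega> i) \<in> borel_measurable M"
proof -
  have "(\<lambda>\<omega>. cstate n (sample_of (observe (history k) \<omega>)) x0 k () i) \<in> borel_measurable M"
    using measurable_comp[OF observe_measurable[OF history_subset_entries]
        cstate_sample_of_measurable[OF order.refl assms, of k]]
    by (simp add: comp_def)
  then show ?thesis using state_observe[OF order.refl assms] by simp
qed

lemma integrable_state:
  assumes "i \<in> N" shows "integrable M (\<lambda>\<omega>. state k \<omega> i)"
proof (rule integrable_const_bound[where B="\<Sum>j\<in>N. \<bar>x0 j\<bar>"])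
  show "AE \<omega> in M. norm (state k \<omega> i) \<le> (\<Sum>j\<in>N. \<bar>x0 j\<bar>)"
    using AE_good by (rule eventually_mono) (use state_abs_bound[OF _ assms] in simp)
qed (use assms in simp)

subsection \<open>Almost sure consensus\<close>

definition "state_max k \<omega> = Max (state k \<omega> ` N)"
definition "state_min k \<omega> = Min (state k \<omega> ` N)"
definition "spread k \<omega> = state_max k \<omega> - state_min k \<omega>"

lemma state_min_le: "i \<in> N \<Longrightarrow> state_min k \<omega> \<le> state k \<omega> i"
  unfolding state_min_def by auto

lemma state_le_max: "i \<in> N \<Longrightarrow> state k \<omega> i \<le> state_max k \<omega>"
  unfolding state_max_def by auto

lemma spread_nonneg: "0 \<le> spread k \<omega>"
  unfolding spread_def using state_min_le[OF one_vertex] state_le_max[OF one_vertex]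
  by (meson order_trans diff_ge_0_iff_ge)

lemma state_max_Suc_le:
  assumes "\<omega> \<in> good" shows "state_max (Suc k) \<omega> \<le> state_max k \<omega>"
proof -
  have "\<forall>i\<in>N. state (Suc k) \<omega> i \<le> state_max k \<omega>"
    using Wmat_nonneg Wmat_row_sum assms state_le_max
    by (auto simp only: state_Suc intro!: convex_combination_le)
  then show ?thesis unfolding state_max_def[of "Suc k"] using vertices_nonempty by auto
qed

lemma state_min_le_Suc:
  assumes "\<omega> \<in> good" shows "state_min k \<omega> \<le> state_min (Suc k) \<omega>"
proof -
  have "\<forall>i\<in>N. state_min k \<omega> \<le> state (Suc k) \<omega> i"
    using Wmat_nonneg Wmat_row_sum assms state_min_le
    by (auto simp only: state_Suc intro!: convex_combination_ge)
  then show ?thesis unfolding state_min_def[of "Suc k"] using vertices_nonempty by auto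
qed

lemma spread_antimono:
  assumes "\<omega> \<in> good" "k \<le> k'" shows "spread k' \<omega> \<le> spread k \<omega>"
  using assms(2)
proof (induction rule: dec_induct)
  case (step k')
  then show ?case
    using state_max_Suc_le[OF assms(1), of k'] state_min_le_Suc[OF assms(1), of k']
    unfolding spread_def by linarith
qed simp

lemma spread_le:
  assumes "\<omega> \<in> good" shows "spread k \<omega> \<le> 2 * (\<Sum>j\<in>N. \<bar>x0 j\<bar>)"
proof -
  have "state_max k \<omega> \<in> state k \<omega> ` N" "state_min k \<omega> \<in> state k \<omega> ` N"
    unfolding state_max_def state_min_def using vertices_nonempty by (auto intro!: Max_in Min_in)
  then obtain i j where "i \<in> N" "state_max k \<omega> = state k \<omega> i" "j \<in> N" "state_min k \<omega> = state k \<omega> j"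
    by blast
  then show ?thesis
    unfolding spread_def using state_abs_bound[OF assms, of i k] state_abs_bound[OF assms, of j k]
    by linarith
qed

definition "spread_of k f =
   Max ((\<lambda>i. cstate n (sample_of f) x0 k () i) ` N) - Min ((\<lambda>i. cstate n (sample_of f) x0 k () i) ` N)"

lemma spread_of_measurable: "spread_of k \<in> borel_measurable (PiM (history k) (\<lambda>_. borel))"
  unfolding spread_of_def using cstate_sample_of_measurable[OF order.refl] by measurable

lemma spread_observe: "spread k \<omega> = spread_of k (observe (history k) \<omega>)"
proof -
  have "state k \<omega> ` N = (\<lambda>i. cstate n (sample_of (observe (history k) \<omega>)) x0 k () i) ` N"
    using state_observe[OF order.refl] by (auto intro!: image_cong)
  then show ?thesis unfolding spread_def state_max_def state_min_def spread_of_def by simp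
qed

lemma spread_measurable[measurable]: "spread k \<in> borel_measurable M"
  unfolding spread_def state_max_def state_min_def by measurable

lemma integrable_spread: "integrable M (spread k)"
proof (rule integrable_const_bound[where B="2 * (\<Sum>j\<in>N. \<bar>x0 j\<bar>)"])
  show "AE \<omega> in M. norm (spread k \<omega>) \<le> 2 * (\<Sum>j\<in>N. \<bar>x0 j\<bar>)"
    using AE_good by (rule eventually_mono) (use spread_le spread_nonneg in auto)
qed simp

definition "edges = {(u, v). u \<in> N \<and> v \<in> N \<and> E u v}"

definition "window = Suc (Max ((\<lambda>(u, v). LEAST s. (u, v) \<in> edges ^^ s) ` (N \<times> N)))"

lemma window_reach: "\<forall>u\<in>N. \<forall>v\<in>N. \<exists>s\<le>window. (u, v) \<in> edges ^^ s"
proof (intro ballI)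
  fix u v assume uv: "u \<in> N" "v \<in> N"
  then have "(u, v) \<in> edges\<^sup>*" using conn unfolding connected_graph_def edges_def by auto
  then obtain s where "(u, v) \<in> edges ^^ s" by (auto simp: rtrancl_power)
  then have "(u, v) \<in> edges ^^ (LEAST s. (u, v) \<in> edges ^^ s)" by (rule LeastI)
  moreover have "(LEAST s. (u, v) \<in> edges ^^ s) \<in> (\<lambda>(u, v). LEAST s. (u, v) \<in> edges ^^ s) ` (N \<times> N)"
    using uv by (intro rev_image_eqI[of "(u, v)"]) auto
  then have "(LEAST s. (u, v) \<in> edges ^^ s) \<le> window"
    unfolding window_def by (intro le_SucI Max_ge) auto
  ultimately show "\<exists>s\<le>window. (u, v) \<in> edges ^^ s" by blast
qed

definition "min_weight = 1 / (real n + 1)"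

definition "all_edges_active s =
   {\<omega>. \<forall>j\<in>{s<..s + window}. \<forall>u\<in>N. \<forall>v\<in>N. At j u v \<omega> = adj E u v}"

lemma spread_window_contract:
  assumes good: "\<omega> \<in> good" and active: "\<omega> \<in> all_edges_active s"
  shows "spread (s + window) \<omega> \<le> (1 - 2 * min_weight ^ window) * spread s \<omega>"
proof -
  define W where "W t v u = Wmat n At (Suc (s + t)) \<omega> v u" for t v u
  define y where "y t = state (s + t) \<omega>" for t
  have W_nonneg: "\<forall>t<window. \<forall>v\<in>N. \<forall>u\<in>N. 0 \<le> W t v u"
    using Wmat_nonneg good unfolding W_def by auto
  have W_row: "\<forall>t<window. \<forall>v\<in>N. (\<Sum>u\<in>N. W t v u) = 1"
    using Wmat_row_sum good unfolding W_def by auto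
  have W_diag: "\<forall>t<window. \<forall>v\<in>N. min_weight \<le> W t v v"
  proof (intro allI impI ballI)
    fix t v assume "v \<in> N"
    then show "min_weight \<le> W t v v"
      using Wmat_lower_bound[OF good, of "Suc (s + t)" v v] diagonal_entry_zero[OF good, of "Suc (s + t)" v]
      unfolding W_def min_weight_def by simp
  qed
  have W_edges: "\<forall>t<window. \<forall>w v. (w, v) \<in> edges \<longrightarrow> min_weight \<le> W t v w"
  proof (intro allI impI)
    fix t w v assume t: "t < window" and wv: "(w, v) \<in> edges"
    then have wv': "w \<in> N" "v \<in> N" "E w v" "w \<noteq> v" using noloop unfolding edges_def by auto
    then have "At (Suc (s + t)) w v \<omega> = 1"
      using active t unfolding all_edges_active_def adj_def by auto
    then show "min_weight \<le> W t v w"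
      using Wmat_lower_bound[OF good, of "Suc (s + t)" v w] wv' unfolding W_def min_weight_def by simp
  qed
  have edges: "edges \<subseteq> N \<times> N" unfolding edges_def by auto
  have y_Suc: "\<forall>t<window. \<forall>v\<in>N. y (Suc t) v = (\<Sum>u\<in>N. W t v u * y t u)"
    unfolding y_def W_def by simp
  have y: "y 0 ` N = state s \<omega> ` N" "y window = state (s + window) \<omega>" unfolding y_def by simp_all
  note contract = averaging_contracts_range[OF finite_atLeastAtMost vertices_nonempty W_nonneg W_row
      W_diag W_edges edges y_Suc _ window_reach, unfolded y, folded state_max_def state_min_def]
  have "0 \<le> min_weight" unfolding min_weight_def by simp
  then have "state_max (s + window) \<omega> \<le> state_max s \<omega> - min_weight ^ window * spread s \<omega>"
    "state_min s \<omega> + min_weight ^ window * spread s \<omega> \<le> state_min (s + window) \<omega>"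
    unfolding state_max_def[of "s + window"] state_min_def[of "s + window"] spread_def
    using contract vertices_nonempty by auto
  then show ?thesis unfolding spread_def by (simp add: algebra_simps)
qed

definition "window_entries s = {s<..s + window} \<times> N \<times> N"
definition "target = (\<lambda>(_::nat, u, v). adj E u v)"
definition "all_active_indicator s f =
   (\<Prod>x\<in>window_entries s. if f x = target x then 1 else (0::real))"

lemma window_entries_subset: "window_entries s \<subseteq> entries"
  unfolding window_entries_def by auto

lemma finite_window_entries: "finite (window_entries s)"
  unfolding window_entries_def by auto

lemma history_window_entries_disjoint: "history s \<inter> window_entries s = {}"
  unfolding history_def window_entries_def by auto

lemma all_active_indicator_measurable:
  "all_active_indicator s \<in> borel_measurable (PiM (window_entries s) (\<lambda>_. borel))"
  unfolding all_active_indicator_def using finite_window_entries by measurable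

lemma all_active_indicator_observe:
  "all_active_indicator s (observe (window_entries s) \<omega>) = indicator (all_edges_active s) \<omega>"
proof -
  have "all_active_indicator s (observe (window_entries s) \<omega>) =
      (\<Prod>x\<in>window_entries s. if entry x \<omega> = target x then 1 else (0::real))"
    unfolding all_active_indicator_def observe_def by (auto intro!: prod.cong)
  also have "\<dots> = (if \<forall>x\<in>window_entries s. entry x \<omega> = target x then 1 else 0)"
    using finite_window_entries by (induction rule: finite_induct) auto
  also have "(\<forall>x\<in>window_entries s. entry x \<omega> = target x) \<longleftrightarrow> \<omega> \<in> all_edges_active s"
    unfolding window_entries_def all_edges_active_def target_def by auto
  finally show ?thesis by (simp add: indicator_def)
qed

definition "p_min = Min (p ` N)"

lemma p_min: "0 < p_min" "p_min \<le> 1" "v \<in> N \<Longrightarrow> p_min \<le> p v"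
proof -
  show "0 < p_min" unfolding p_min_def using prange vertices_nonempty by (auto simp: Min_gr_iff)
  show le: "v \<in> N \<Longrightarrow> p_min \<le> p v" for v unfolding p_min_def by auto
  have "p 1 < 1" using prange one_vertex by blast
  then show "p_min \<le> 1" using le[OF one_vertex] by linarith
qed

lemma expectation_entry_hits_target:
  assumes "x \<in> entries"
  shows "p_min \<le> (\<integral>\<omega>. (if entry x \<omega> = target x then 1 else 0) \<partial>M)"
proof -
  obtain k u v where x: "x = (k, u, v)" "k \<ge> 1" "u \<in> N" "v \<in> N" using assms by auto
  let ?A = "{\<omega> \<in> space M. At k u v \<omega> = adj E u v}"
  have "?A \<in> events" using x by measurable
  have "(\<integral>\<omega>. (if entry x \<omega> = target x then 1 else 0) \<partial>M) = (\<integral>\<omega>. indicator ?A \<omega> \<partial>M)"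
    using x by (intro Bochner_Integration.integral_cong) (auto simp: indicator_def target_def)
  also have "\<dots> = prob ?A" using \<open>?A \<in> events\<close> by simp
  also have "p_min \<le> prob ?A"
    using dist_edge dist_nonedge x p_min(2) p_min(3)[of v] by (cases "E u v") (auto simp: adj_def)
  finally show ?thesis .
qed

definition "window_prob = p_min ^ (window * n * n)"

lemma expectation_all_edges_active_ge:
  "window_prob \<le> (\<integral>\<omega>. indicator (all_edges_active s) \<omega> \<partial>M)"
proof -
  define Y where "Y x \<omega> = (if entry x \<omega> = target x then 1 else (0::real))" for x \<omega>
  have indep_Y: "indep_vars (\<lambda>_. borel) Y (window_entries s)"
    unfolding Y_def
    using indep_vars_compose2[OF indep_vars_subset[OF indep window_entries_subset],
        where Y="\<lambda>x y. if y = target x then 1 else (0::real)" and N="\<lambda>_. borel"]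
    by (simp add: split_beta')
  have integrable_Y: "integrable M (Y x)" if "x \<in> window_entries s" for x
  proof (rule integrable_const_bound[where B=1])
    show "Y x \<in> borel_measurable M" using indep_Y that unfolding indep_vars_def by auto
  qed (simp add: Y_def)
  have "card (window_entries s) = window * n * n"
    unfolding window_entries_def by (simp add: card_cartesian_product)
  then have "window_prob = (\<Prod>x\<in>window_entries s. p_min)"
    unfolding window_prob_def by simp
  also have "\<dots> \<le> (\<Prod>x\<in>window_entries s. \<integral>\<omega>. Y x \<omega> \<partial>M)"
  proof (intro prod_mono conjI)
    fix x assume "x \<in> window_entries s"
    then show "p_min \<le> (\<integral>\<omega>. Y x \<omega> \<partial>M)"
      unfolding Y_def using window_entries_subset by (intro expectation_entry_hits_target) blast
  qed (use p_min in auto)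
  also have "\<dots> = (\<integral>\<omega>. (\<Prod>x\<in>window_entries s. Y x \<omega>) \<partial>M)"
    by (rule indep_vars_lebesgue_integral[OF finite_window_entries indep_Y integrable_Y, symmetric])
  also have "\<dots> = (\<integral>\<omega>. indicator (all_edges_active s) \<omega> \<partial>M)"
    unfolding all_active_indicator_observe[symmetric] all_active_indicator_def observe_def Y_def
    by (intro Bochner_Integration.integral_cong prod.cong) auto
  finally show ?thesis .
qed

definition "decay_rate = 1 - 2 * min_weight ^ window * window_prob"

lemma decay_rate_bounds: "0 \<le> decay_rate" "decay_rate < 1"
proof -
  have min_weight: "0 < min_weight" "min_weight \<le> 1 / 3"
    unfolding min_weight_def using n2 by (auto simp: field_simps)
  have "min_weight ^ window \<le> min_weight ^ 1"
    using min_weight by (intro power_decreasing) (auto simp: window_def)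
  then have "min_weight ^ window \<le> 1 / 3" using min_weight by simp
  moreover have prob: "0 < window_prob" "window_prob \<le> 1"
    unfolding window_prob_def using p_min by (auto intro: power_le_one)
  ultimately have "min_weight ^ window * window_prob \<le> 1 / 3 * 1"
    by (intro mult_mono) auto
  moreover have "0 < min_weight ^ window * window_prob" using min_weight prob by simp
  moreover have "decay_rate = 1 - 2 * (min_weight ^ window * window_prob)"
    unfolding decay_rate_def by (simp add: mult.assoc)
  ultimately show "0 \<le> decay_rate" "decay_rate < 1" by linarith+
qed

lemma expected_spread_window_decay:
  "(\<integral>\<omega>. spread (s + window) \<omega> \<partial>M) \<le> decay_rate * (\<integral>\<omega>. spread s \<omega> \<partial>M)"
proof -
  let ?H = "indicator (all_edges_active s) :: 'a \<Rightarrow> real"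
  let ?g = "2 * min_weight ^ window"
  have indep_H: "indep_var borel (spread s) borel ?H"
    using indep_var_observe[OF history_window_entries_disjoint history_subset_entries
        window_entries_subset spread_of_measurable all_active_indicator_measurable]
    by (simp add: spread_observe[symmetric] all_active_indicator_observe)
  have "?H \<in> borel_measurable M"
    using measurable_comp[OF observe_measurable[OF window_entries_subset] all_active_indicator_measurable]
    by (simp add: comp_def all_active_indicator_observe)
  then have integrable_H: "integrable M ?H"
    by (intro integrable_const_bound[where B=1]) auto
  have integrable_product: "integrable M (\<lambda>\<omega>. spread s \<omega> * ?H \<omega>)"
    by (rule indep_var_integrable[OF indep_H integrable_spread integrable_H])
  have expectation_product:
    "(\<integral>\<omega>. spread s \<omega> * ?H \<omega> \<partial>M) = (\<integral>\<omega>. spread s \<omega> \<partial>M) * (\<integral>\<omega>. ?H \<omega> \<partial>M)"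
    by (rule indep_var_lebesgue_integral[OF indep_H integrable_spread integrable_H])
  have "AE \<omega> in M. spread (s + window) \<omega> \<le> spread s \<omega> - ?g * (spread s \<omega> * ?H \<omega>)"
    using AE_good
  proof (rule eventually_mono)
    fix \<omega> assume good: "\<omega> \<in> good"
    show "spread (s + window) \<omega> \<le> spread s \<omega> - ?g * (spread s \<omega> * ?H \<omega>)"
    proof (cases "\<omega> \<in> all_edges_active s")
      case True
      then show ?thesis using spread_window_contract[OF good True] by (simp add: algebra_simps)
    next
      case False
      then show ?thesis using spread_antimono[OF good, of s "s + window"] by simp
    qed
  qed
  then have "(\<integral>\<omega>. spread (s + window) \<omega> \<partial>M) \<le> (\<integral>\<omega>. spread s \<omega> - ?g * (spread s \<omega> * ?H \<omega>) \<partial>M)"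
    using integrable_spread integrable_product by (intro integral_mono_AE) auto
  also have "\<dots> = (\<integral>\<omega>. spread s \<omega> \<partial>M) - ?g * ((\<integral>\<omega>. spread s \<omega> \<partial>M) * (\<integral>\<omega>. ?H \<omega> \<partial>M))"
    using integrable_spread integrable_product by (simp add: expectation_product)
  also have "\<dots> \<le> (\<integral>\<omega>. spread s \<omega> \<partial>M) - ?g * ((\<integral>\<omega>. spread s \<omega> \<partial>M) * window_prob)"
    using expectation_all_edges_active_ge[of s] spread_nonneg min_weight_def
    by (intro diff_left_mono mult_left_mono) (auto intro: Bochner_Integration.integral_nonneg)
  finally show ?thesis unfolding decay_rate_def by (simp add: algebra_simps)
qed

lemma expected_spread_decay:
  "(\<integral>\<omega>. spread (m * window) \<omega> \<partial>M) \<le> decay_rate ^ m * (\<integral>\<omega>. spread 0 \<omega> \<partial>M)"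
proof (induction m)
  case (Suc m)
  have "(\<integral>\<omega>. spread (Suc m * window) \<omega> \<partial>M) \<le> decay_rate * (\<integral>\<omega>. spread (m * window) \<omega> \<partial>M)"
    using expected_spread_window_decay[of "m * window"] by (simp add: add.commute)
  also have "\<dots> \<le> decay_rate * (decay_rate ^ m * (\<integral>\<omega>. spread 0 \<omega> \<partial>M))"
    using Suc decay_rate_bounds by (intro mult_left_mono) auto
  finally show ?case by simp
qed simp

lemma expected_spread_tendsto_0: "(\<lambda>m. \<integral>\<omega>. spread (m * window) \<omega> \<partial>M) \<longlonglongrightarrow> 0"
proof (rule tendsto_sandwich[of "\<lambda>_. 0" _ _ "\<lambda>m. decay_rate ^ m * (\<integral>\<omega>. spread 0 \<omega> \<partial>M)"])
  show "\<forall>\<^sub>F m in sequentially. 0 \<le> (\<integral>\<omega>. spread (m * window) \<omega> \<partial>M)"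
    by (intro always_eventually allI Bochner_Integration.integral_nonneg) (simp add: spread_nonneg)
  show "\<forall>\<^sub>F m in sequentially. (\<integral>\<omega>. spread (m * window) \<omega> \<partial>M) \<le> decay_rate ^ m * (\<integral>\<omega>. spread 0 \<omega> \<partial>M)"
    by (intro always_eventually allI expected_spread_decay)
  show "(\<lambda>m. decay_rate ^ m * (\<integral>\<omega>. spread 0 \<omega> \<partial>M)) \<longlonglongrightarrow> 0"
    using decay_rate_bounds by (intro tendsto_mult_left_zero LIMSEQ_power_zero) auto
qed simp

lemma AE_spread_not_bounded_below:
  assumes e: "0 < e"
  shows "AE \<omega> in M. \<not> (\<forall>k. e \<le> spread k \<omega>)"
proof -
  let ?Z = "{\<omega> \<in> space M. \<forall>k. e \<le> spread k \<omega>}"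
  have Z: "?Z \<in> events" by measurable
  have Markov: "prob ?Z \<le> (\<integral>\<omega>. spread (m * window) \<omega> \<partial>M) / e" for m
  proof -
    have "prob ?Z \<le> prob {\<omega> \<in> space M. e \<le> spread (m * window) \<omega>}"
      by (intro finite_measure_mono) auto
    also have "\<dots> \<le> (\<integral>\<omega>. spread (m * window) \<omega> \<partial>M) / e"
      by (rule integral_Markov_inequality_measure[OF integrable_spread _ _ e, where A="space M"])
        (auto simp: spread_nonneg)
    finally show ?thesis .
  qed
  have "(\<lambda>m. (\<integral>\<omega>. spread (m * window) \<omega> \<partial>M) / e) \<longlonglongrightarrow> 0 / e"
    by (intro tendsto_divide expected_spread_tendsto_0) (use e in auto)
  then have "prob ?Z \<le> 0 / e"
    by (rule LIMSEQ_le_const) (use Markov in auto)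
  then have "?Z \<in> null_sets M"
    using Z measure_nonneg[of M ?Z] by (auto simp: emeasure_eq_measure)
  then have "AE \<omega> in M. \<omega> \<notin> ?Z" by (rule AE_not_in)
  with AE_space show ?thesis by eventually_elim auto
qed

lemma AE_spread_tendsto_0: "AE \<omega> in M. (\<lambda>k. spread k \<omega>) \<longlonglongrightarrow> 0"
proof -
  have "AE \<omega> in M. \<forall>j::nat. \<not> (\<forall>k. 1 / real (Suc j) \<le> spread k \<omega>)"
    by (intro AE_all_countable[THEN iffD2] allI AE_spread_not_bounded_below) auto
  with AE_good show ?thesis
  proof eventually_elim
    case (elim \<omega>)
    show ?case
    proof (rule LIMSEQ_I)
      fix r :: real assume "0 < r"
      then obtain j where j: "1 / real (Suc j) < r"
        using reals_Archimedean by (metis inverse_eq_divide of_nat_Suc)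
      obtain k where k: "spread k \<omega> < 1 / real (Suc j)" using elim(2) by (meson not_le)
      have "norm (spread m \<omega> - 0) < r" if "m \<ge> k" for m
        using spread_antimono[OF elim(1) that] spread_nonneg[of m \<omega>] k j by simp
      then show "\<exists>no. \<forall>m\<ge>no. norm (spread m \<omega> - 0) < r" by blast
    qed
  qed
qed

definition "consensus \<omega> = lim (\<lambda>k. state k \<omega> 1)"

lemma consensus_measurable[measurable]: "consensus \<in> borel_measurable M"
  unfolding consensus_def using state_measurable[OF one_vertex] by measurable

lemma state_tendsto_consensus:
  assumes good: "\<omega> \<in> good" and spread: "(\<lambda>k. spread k \<omega>) \<longlonglongrightarrow> 0"
  shows "\<forall>i\<in>N. (\<lambda>k. state k \<omega> i) \<longlonglongrightarrow> consensus \<omega>"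
proof -
  have "decseq (\<lambda>k. state_max k \<omega>)" using state_max_Suc_le[OF good] by (intro decseq_SucI) auto
  moreover have "state_min 0 \<omega> \<le> state_max k \<omega>" for k
  proof -
    have "state_min 0 \<omega> \<le> state_min k \<omega>"
      by (induction k) (auto intro: order_trans state_min_le_Suc[OF good])
    then show ?thesis using state_min_le[OF one_vertex] state_le_max[OF one_vertex] by (meson order_trans)
  qed
  ultimately obtain L where max: "(\<lambda>k. state_max k \<omega>) \<longlonglongrightarrow> L"
    using decseq_convergent by blast
  have "(\<lambda>k. state_max k \<omega> - spread k \<omega>) \<longlonglongrightarrow> L - 0" by (intro tendsto_diff max spread)
  then have min: "(\<lambda>k. state_min k \<omega>) \<longlonglongrightarrow> L" by (simp add: spread_def)
  have state: "(\<lambda>k. state k \<omega> i) \<longlonglongrightarrow> L" if "i \<in> N" for i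
    by (rule tendsto_sandwich[OF _ _ min max])
      (auto intro!: always_eventually state_min_le state_le_max that)
  have "consensus \<omega> = L" unfolding consensus_def using state[OF one_vertex] by (rule limI)
  then show ?thesis using state by auto
qed

lemma AE_state_tendsto_consensus: "AE \<omega> in M. \<forall>i\<in>N. (\<lambda>k. state k \<omega> i) \<longlonglongrightarrow> consensus \<omega>"
  using AE_good AE_spread_tendsto_0 by eventually_elim (use state_tendsto_consensus in blast)

subsection \<open>The mean weight matrix\<close>

definition "nbrs v = {w \<in> N. E w v}"

lemma deg_eq_card_nbrs: "deg n E v = card (nbrs v)"
  unfolding deg_def nbrs_def ..

lemma indep_entry_nbrs_sum:
  assumes "k \<ge> 1" "v \<in> N" "w \<in> N" "S \<subseteq> N" "w \<notin> S"
    and g[measurable]: "g \<in> borel_measurable borel"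
  shows "indep_var borel (At k w v) borel (\<lambda>\<omega>. g (\<Sum>w'\<in>S. At k w' v \<omega>))"
proof -
  let ?A = "{(k, w, v)}" and ?B = "{k} \<times> S \<times> {v}"
  have "finite S" using assms finite_subset by blast
  then have G: "(\<lambda>f. g (\<Sum>w'\<in>S. f (k, w', v))) \<in> borel_measurable (PiM ?B (\<lambda>_. borel))"
    by measurable
  have F: "(\<lambda>f. f (k, w, v)) \<in> borel_measurable (PiM ?A (\<lambda>_. borel))" by measurable
  have "?A \<inter> ?B = {}" "?A \<subseteq> entries" "?B \<subseteq> entries" using assms by auto
  from indep_var_observe[OF this F G] have "indep_var borel (\<lambda>\<omega>. observe ?A \<omega> (k, w, v))
      borel (\<lambda>\<omega>. g (\<Sum>w'\<in>S. observe ?B \<omega> (k, w', v)))" .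
  moreover have "(\<lambda>\<omega>. observe ?A \<omega> (k, w, v)) = At k w v" by (auto simp: observe_def)
  moreover have "(\<lambda>\<omega>. g (\<Sum>w'\<in>S. observe ?B \<omega> (k, w', v))) = (\<lambda>\<omega>. g (\<Sum>w'\<in>S. At k w' v \<omega>))"
    by (auto simp: observe_def intro!: ext arg_cong[where f=g] sum.cong)
  ultimately show ?thesis by simp
qed

lemma integrable_entry: "k \<ge> 1 \<Longrightarrow> u \<in> N \<Longrightarrow> v \<in> N \<Longrightarrow> integrable M (At k u v)"
  by (rule integrable_const_bound[where B=1])
    (auto intro!: eventually_mono[OF AE_good] dest: goodD)

lemma expectation_entry:
  assumes "k \<ge> 1" "v \<in> N" "w \<in> N" "E w v"
  shows "(\<integral>\<omega>. At k w v \<omega> \<partial>M) = p v"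
proof -
  let ?A = "{\<omega> \<in> space M. At k w v \<omega> = 1}"
  have "?A \<in> events" using assms by measurable
  have "(\<integral>\<omega>. At k w v \<omega> \<partial>M) = (\<integral>\<omega>. indicator ?A \<omega> \<partial>M)"
    by (rule integral_cong_AE)
      (use assms in \<open>auto intro!: eventually_mono[OF AE_good] dest: goodD simp: indicator_def\<close>)
  also have "\<dots> = prob ?A" using \<open>?A \<in> events\<close> by simp
  also have "\<dots> = p v" using dist_edge assms by (auto simp: adj_def)
  finally show ?thesis .
qed

lemma expectation_entry_mul_nbrs_sum:
  assumes "k \<ge> 1" "v \<in> N" "w \<in> nbrs v" "S \<subseteq> N" "w \<notin> S"
    and g: "g \<in> borel_measurable borel"
    and integrable_g: "integrable M (\<lambda>\<omega>. g (\<Sum>w'\<in>S. At k w' v \<omega>))"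
  shows "integrable M (\<lambda>\<omega>. At k w v \<omega> * g (\<Sum>w'\<in>S. At k w' v \<omega>))"
    and "(\<integral>\<omega>. At k w v \<omega> * g (\<Sum>w'\<in>S. At k w' v \<omega>) \<partial>M) = p v * (\<integral>\<omega>. g (\<Sum>w'\<in>S. At k w' v \<omega>) \<partial>M)"
proof -
  have w: "w \<in> N" "E w v" using assms(3) unfolding nbrs_def by auto
  note indep = indep_entry_nbrs_sum[OF assms(1,2) w(1) assms(4,5) g]
  note integrable_At = integrable_entry[OF assms(1) w(1) assms(2)]
  show "integrable M (\<lambda>\<omega>. At k w v \<omega> * g (\<Sum>w'\<in>S. At k w' v \<omega>))"
    by (rule indep_var_integrable[OF indep integrable_At integrable_g])
  show "(\<integral>\<omega>. At k w v \<omega> * g (\<Sum>w'\<in>S. At k w' v \<omega>) \<partial>M) = p v * (\<integral>\<omega>. g (\<Sum>w'\<in>S. At k w' v \<omega>) \<partial>M)"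
    using indep_var_lebesgue_integral[OF indep integrable_At integrable_g]
      expectation_entry[OF assms(1,2) w] by simp
qed

lemma expectation_nbrs_sum:
  assumes "k \<ge> 1" "v \<in> N" "S \<subseteq> nbrs v" and f: "f \<in> borel_measurable borel"
  shows "integrable M (\<lambda>\<omega>. f (\<Sum>w\<in>S. At k w v \<omega>))"
    and "(\<integral>\<omega>. f (\<Sum>w\<in>S. At k w v \<omega>) \<partial>M) = binomial_mean (card S) (p v) f"
proof -
  have "finite S" using assms(3) unfolding nbrs_def by (rule finite_subset) simp
  then have "\<forall>f. f \<in> borel_measurable borel \<longrightarrow> integrable M (\<lambda>\<omega>. f (\<Sum>w\<in>S. At k w v \<omega>)) \<and>
      (\<integral>\<omega>. f (\<Sum>w\<in>S. At k w v \<omega>) \<partial>M) = binomial_mean (card S) (p v) f"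
    using assms(3)
  proof (induction S rule: finite_induct)
    case empty then show ?case by (simp add: binomial_mean_0 prob_space)
  next
    case (insert w S)
    have w: "w \<in> nbrs v" and S: "S \<subseteq> N" "S \<subseteq> nbrs v"
      using insert.prems unfolding nbrs_def by auto
    show ?case
    proof (intro allI impI)
      fix f :: "real \<Rightarrow> real" assume f[measurable]: "f \<in> borel_measurable borel"
      let ?T = "\<lambda>\<omega>. \<Sum>w'\<in>S. At k w' v \<omega>"
      let ?G = "\<lambda>\<omega>. At k w v \<omega> * f (?T \<omega> + 1) + f (?T \<omega>) - At k w v \<omega> * f (?T \<omega>)"
      have shift: "(\<lambda>x. f (x + 1)) \<in> borel_measurable borel" by measurable
      note IH_shift = insert.IH[rule_format, OF S(2) shift] and IH = insert.IH[rule_format, OF S(2) f]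
      note product_shift = expectation_entry_mul_nbrs_sum[OF assms(1,2) w S(1) insert(2) shift
          conjunct1[OF IH_shift]]
      note product = expectation_entry_mul_nbrs_sum[OF assms(1,2) w S(1) insert(2) f conjunct1[OF IH]]
      have [measurable]: "?T \<in> borel_measurable M" "At k w v \<in> borel_measurable M"
        using S(1) w assms(1,2) unfolding nbrs_def by (auto intro!: borel_measurable_sum)
      have f_measurable: "(\<lambda>\<omega>. f (\<Sum>w'\<in>insert w S. At k w' v \<omega>)) \<in> borel_measurable M"
        using insert(1,2) by simp
      have G_measurable: "?G \<in> borel_measurable M" by measurable
      \<comment> \<open>the new entry is 0 or 1, so it selects between the two shifted sums\<close>
      have "AE \<omega> in M. f (\<Sum>w'\<in>insert w S. At k w' v \<omega>) = ?G \<omega>"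
      proof (rule eventually_mono[OF AE_good])
        fix \<omega> assume "\<omega> \<in> good"
        then have "At k w v \<omega> = 0 \<or> At k w v \<omega> = 1"
          using goodD assms(1,2) w unfolding nbrs_def by blast
        then show "f (\<Sum>w'\<in>insert w S. At k w' v \<omega>) = ?G \<omega>"
          using insert(1,2) by (auto simp: add.commute)
      qed
      note cong = integrable_cong_AE[OF f_measurable G_measurable this]
        integral_cong_AE[OF f_measurable G_measurable this]
      have "integrable M ?G" using product_shift(1) product(1) IH by auto
      moreover have "(\<integral>\<omega>. ?G \<omega> \<partial>M) = binomial_mean (card (insert w S)) (p v) f"
        using product_shift product IH_shift IH insert(1,2)
        by (simp add: binomial_mean_Suc algebra_simps)
      ultimately show "integrable M (\<lambda>\<omega>. f (\<Sum>w'\<in>insert w S. At k w' v \<omega>)) \<and>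
          (\<integral>\<omega>. f (\<Sum>w'\<in>insert w S. At k w' v \<omega>) \<partial>M) = binomial_mean (card (insert w S)) (p v) f"
        by (simp add: cong)
    qed
  qed
  with f show "integrable M (\<lambda>\<omega>. f (\<Sum>w\<in>S. At k w v \<omega>))"
    and "(\<integral>\<omega>. f (\<Sum>w\<in>S. At k w v \<omega>) \<partial>M) = binomial_mean (card S) (p v) f"
    by blast+
qed

definition "mean_Wmat v u =
   (if u = v then binomial_mean (deg n E v) (p v) (\<lambda>x. 1 / (x + 1))
    else if E u v then p v * binomial_mean (deg n E v - 1) (p v) (\<lambda>x. 1 / (x + 2))
    else 0)"

lemma rand_deg_eq_nbrs_sum:
  assumes "\<omega> \<in> good" "k \<ge> 1" "v \<in> N"
  shows "rand_deg n At k \<omega> v = (\<Sum>w\<in>nbrs v. At k w v \<omega>)"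
  unfolding rand_deg_def nbrs_def
  by (rule sum.mono_neutral_right) (use goodD[OF assms(1,2) _ assms(3)] in auto)

lemma expectation_Wmat:
  assumes k: "k \<ge> 1" and v: "v \<in> N" and u: "u \<in> N"
  shows "(\<integral>\<omega>. Wmat n At k \<omega> v u \<partial>M) = mean_Wmat v u"
proof -
  have nbrs: "nbrs v \<subseteq> N" "finite (nbrs v)" "card (nbrs v) = deg n E v"
    unfolding nbrs_def deg_def by auto
  have sum_measurable: "(\<lambda>\<omega>. \<Sum>w\<in>S. At k w v \<omega>) \<in> borel_measurable M" if "S \<subseteq> N" for S
    using that k v by (intro borel_measurable_sum) auto
  consider "u = v" | "u \<noteq> v" "E u v" | "u \<noteq> v" "\<not> E u v" by blast
  then show ?thesis
  proof cases
    case 1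
    have "AE \<omega> in M. Wmat n At k \<omega> v u = 1 / ((\<Sum>w\<in>nbrs v. At k w v \<omega>) + 1)"
      by (rule eventually_mono[OF AE_good])
        (use k v 1 in \<open>auto simp: Wmat_def rand_deg_eq_nbrs_sum diagonal_entry_zero\<close>)
    then have "(\<integral>\<omega>. Wmat n At k \<omega> v u \<partial>M) = (\<integral>\<omega>. 1 / ((\<Sum>w\<in>nbrs v. At k w v \<omega>) + 1) \<partial>M)"
      using k u v sum_measurable[OF nbrs(1)] by (intro integral_cong_AE) auto
    also have "\<dots> = binomial_mean (deg n E v) (p v) (\<lambda>x. 1 / (x + 1))"
      using expectation_nbrs_sum(2)[OF k v order.refl, of "\<lambda>x. 1 / (x + 1)"] nbrs by simp
    finally show ?thesis using 1 by (simp add: mean_Wmat_def)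
  next
    case 2
    let ?R = "nbrs v - {u}"
    have u_nbr: "u \<in> nbrs v" using 2 u unfolding nbrs_def by auto
    have R: "?R \<subseteq> N" "?R \<subseteq> nbrs v" "u \<notin> ?R" using nbrs by auto
    let ?g = "\<lambda>x. 1 / (x + 2) :: real"
    \<comment> \<open>when \<open>At k u v = 1\<close>, it contributes 1 to the random degree\<close>
    have "AE \<omega> in M. Wmat n At k \<omega> v u = At k u v \<omega> * ?g (\<Sum>w\<in>?R. At k w v \<omega>)"
    proof (rule eventually_mono[OF AE_good])
      fix \<omega> assume good: "\<omega> \<in> good"
      have "rand_deg n At k \<omega> v = At k u v \<omega> + (\<Sum>w\<in>?R. At k w v \<omega>)"
        using rand_deg_eq_nbrs_sum[OF good k v] sum.remove[OF nbrs(2) u_nbr] by simp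
      moreover have "At k u v \<omega> = 0 \<or> At k u v \<omega> = 1" using goodD[OF good k u v] by blast
      ultimately show "Wmat n At k \<omega> v u = At k u v \<omega> * ?g (\<Sum>w\<in>?R. At k w v \<omega>)"
        using 2 by (auto simp: Wmat_def add.commute)
    qed
    then have "(\<integral>\<omega>. Wmat n At k \<omega> v u \<partial>M) = (\<integral>\<omega>. At k u v \<omega> * ?g (\<Sum>w\<in>?R. At k w v \<omega>) \<partial>M)"
      using k u v sum_measurable[OF R(1)] by (intro integral_cong_AE) auto
    also have "\<dots> = p v * (\<integral>\<omega>. ?g (\<Sum>w\<in>?R. At k w v \<omega>) \<partial>M)"
      by (rule expectation_entry_mul_nbrs_sum(2)[OF k v u_nbr R(1,3) _ expectation_nbrs_sum(1)[OF k v R(2)]])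
        simp_all
    also have "\<dots> = p v * binomial_mean (deg n E v - 1) (p v) ?g"
      using expectation_nbrs_sum(2)[OF k v R(2), of ?g] u_nbr nbrs by (simp add: card_Diff_singleton)
    finally show ?thesis using 2 by (simp add: mean_Wmat_def)
  next
    case 3
    have "AE \<omega> in M. Wmat n At k \<omega> v u = 0"
      by (rule eventually_mono[OF AE_good]) (use k u v 3 in \<open>auto simp: Wmat_def dest: goodD\<close>)
    then have "(\<integral>\<omega>. Wmat n At k \<omega> v u \<partial>M) = (\<integral>\<omega>. 0 \<partial>M)"
      using k u v by (intro integral_cong_AE) auto
    then show ?thesis using 3 by (simp add: mean_Wmat_def)
  qed
qed

lemma mean_Wmat_row_sum:
  assumes v: "v \<in> N" shows "(\<Sum>u\<in>N. mean_Wmat v u) = 1"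
proof -
  have "(\<Sum>u\<in>N. mean_Wmat v u) = (\<Sum>u\<in>N. \<integral>\<omega>. Wmat n At 1 \<omega> v u \<partial>M)"
    using expectation_Wmat[of 1 v] v by simp
  also have "\<dots> = (\<integral>\<omega>. (\<Sum>u\<in>N. Wmat n At 1 \<omega> v u) \<partial>M)"
    using v integrable_Wmat by (intro Bochner_Integration.integral_sum[symmetric]) auto
  also have "\<dots> = (\<integral>\<omega>. 1 \<partial>M)"
  proof (rule integral_cong_AE)
    show "(\<lambda>\<omega>. \<Sum>u\<in>N. Wmat n At 1 \<omega> v u) \<in> borel_measurable M"
      using v by (intro borel_measurable_sum) auto
    show "AE \<omega> in M. (\<Sum>u\<in>N. Wmat n At 1 \<omega> v u) = 1"
      by (rule eventually_mono[OF AE_good]) (use Wmat_row_sum[of _ 1 v] v in auto)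
  qed simp
  finally show ?thesis by (simp add: prob_space)
qed

lemma mean_Wmat_row_sum_eq:
  assumes v: "v \<in> N"
  shows "(\<Sum>u\<in>N. mean_Wmat v u) = binomial_mean (deg n E v) (p v) (\<lambda>x. 1 / (x + 1))
    + real (deg n E v) * (p v * binomial_mean (deg n E v - 1) (p v) (\<lambda>x. 1 / (x + 2)))"
proof -
  have "{u \<in> N - {v}. E u v} = nbrs v" unfolding nbrs_def using noloop by auto
  moreover have "(\<Sum>u\<in>N. mean_Wmat v u) = mean_Wmat v v + (\<Sum>u\<in>N - {v}. mean_Wmat v u)"
    using v by (simp add: sum.remove)
  moreover have "(\<Sum>u\<in>N - {v}. mean_Wmat v u) = (\<Sum>u\<in>{u \<in> N - {v}. E u v}.
      p v * binomial_mean (deg n E v - 1) (p v) (\<lambda>x. 1 / (x + 2)))"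
    by (subst sum.inter_filter) (auto simp: mean_Wmat_def intro!: sum.cong)
  ultimately show ?thesis by (simp add: mean_Wmat_def deg_eq_card_nbrs)
qed

lemma weight_denominator_pos:
  assumes v: "v \<in> N"
  shows "0 < p v * (real (deg n E v) + 1) - 1 + (1 - p v) ^ (deg n E v + 1)"
proof -
  let ?q = "p v" and ?d = "deg n E v"
  have q: "0 < ?q" "?q < 1" using prange v by auto
  have d: "?d \<ge> 1" using degpos v by auto
  have "1 + real ?d * (- ?q) \<le> (1 + - ?q) ^ ?d" using q by (intro Bernoulli_inequality) auto
  then have "(1 - real ?d * ?q) * (1 - ?q) \<le> (1 - ?q) ^ ?d * (1 - ?q)"
    using q by (intro mult_right_mono) auto
  moreover have "real ?d * ?q * ?q > 0" using q d by auto
  ultimately show ?thesis by (simp add: algebra_simps)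
qed

lemma weight_pos: assumes v: "v \<in> N" shows "0 < weight n E p v"
proof -
  have "1 \<le> deg n E v" "0 < p v" using degpos prange v by auto
  then show ?thesis using weight_denominator_pos[OF v] unfolding weight_def Let_def
    by (intro divide_pos_pos mult_pos_pos) auto
qed

definition "stationary_weight v = rho n E p * weight n E p v"

lemma sum_stationary_weight: "(\<Sum>v\<in>N. stationary_weight v) = 1"
proof -
  have "0 < (\<Sum>i\<in>N. weight n E p i)"
    using weight_pos vertices_nonempty by (intro sum_pos) auto
  then show ?thesis unfolding stationary_weight_def rho_def by (simp add: sum_distrib_left[symmetric])
qed

lemma stationary_weight_mul_mean_Wmat_diag:
  assumes v: "v \<in> N"
  shows "stationary_weight v * (1 - mean_Wmat v v) = rho n E p * real (deg n E v)"
proof -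
  let ?q = "p v" and ?d = "real (deg n E v)"
  define den where "den = ?q * (?d + 1) - 1 + (1 - ?q) ^ (deg n E v + 1)"
  have q: "0 < ?q" using prange v by auto
  have den: "den \<noteq> 0" using weight_denominator_pos[OF v] unfolding den_def by simp
  have d1q: "(?d + 1) * ?q \<noteq> 0" using q by simp
  have "1 - mean_Wmat v v = 1 - (1 - (1 - ?q) ^ (deg n E v + 1)) / ((?d + 1) * ?q)"
    unfolding mean_Wmat_def using binomial_mean_inverse_Suc[OF q] by simp
  also have "\<dots> = den / ((?d + 1) * ?q)"
    using d1q unfolding den_def by (simp add: field_simps)
  finally have "stationary_weight v * (1 - mean_Wmat v v)
      = rho n E p * ((?q * (?d + 1) * ?d / den) * (den / ((?d + 1) * ?q)))"
    unfolding stationary_weight_def weight_def Let_def den_def by simp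
  also have "(?q * (?d + 1) * ?d / den) * (den / ((?d + 1) * ?q)) = (?q * (?d + 1) * ?d) / ((?d + 1) * ?q)"
    using den by simp
  also have "?q * (?d + 1) * ?d = ((?d + 1) * ?q) * ?d" by (simp only: ac_simps)
  also have "\<dots> / ((?d + 1) * ?q) = ?d" using d1q by (rule nonzero_mult_div_cancel_left)
  finally show ?thesis .
qed

text \<open>The off-diagonal mean weight is read off the row sum rather than computed directly.\<close>
lemma stationary_weight_mul_mean_Wmat_edge:
  assumes v: "v \<in> N" and "E u v" "u \<noteq> v"
  shows "stationary_weight v * mean_Wmat v u = rho n E p"
proof -
  have d: "0 < real (deg n E v)" using degpos v by (simp add: Suc_le_eq)
  have row: "real (deg n E v) * mean_Wmat v u = 1 - mean_Wmat v v"
    using mean_Wmat_row_sum[OF v] mean_Wmat_row_sum_eq[OF v] assms by (simp add: mean_Wmat_def)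
  have "real (deg n E v) * (stationary_weight v * mean_Wmat v u)
      = stationary_weight v * (real (deg n E v) * mean_Wmat v u)"
    by (rule mult.left_commute)
  also have "\<dots> = rho n E p * real (deg n E v)"
    unfolding row by (rule stationary_weight_mul_mean_Wmat_diag[OF v])
  finally show ?thesis using d by simp
qed

lemma stationary_weight_left_eigenvector:
  assumes u: "u \<in> N"
  shows "(\<Sum>v\<in>N. stationary_weight v * mean_Wmat v u) = stationary_weight u"
proof -
  have "{v \<in> N - {u}. E u v} = nbrs u" unfolding nbrs_def using noloop sym u by auto
  moreover have "(\<Sum>v\<in>N. stationary_weight v * mean_Wmat v u)
      = stationary_weight u * mean_Wmat u u + (\<Sum>v\<in>N - {u}. stationary_weight v * mean_Wmat v u)"
    using u by (simp add: sum.remove)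
  moreover have "(\<Sum>v\<in>N - {u}. stationary_weight v * mean_Wmat v u)
      = (\<Sum>v\<in>N - {u}. if E u v then rho n E p else 0)"
  proof (rule sum.cong[OF refl])
    fix v assume v: "v \<in> N - {u}"
    show "stationary_weight v * mean_Wmat v u = (if E u v then rho n E p else 0)"
    proof (cases "E u v")
      case True
      then show ?thesis using stationary_weight_mul_mean_Wmat_edge[of v u] v by simp
    qed (use v in \<open>simp add: mean_Wmat_def\<close>)
  qed
  moreover have "\<dots> = (\<Sum>v\<in>{v \<in> N - {u}. E u v}. rho n E p)"
    by (rule sum.inter_filter[symmetric]) simp
  ultimately have "(\<Sum>v\<in>N. stationary_weight v * mean_Wmat v u)
      = stationary_weight u * mean_Wmat u u + rho n E p * real (deg n E u)"
    by (simp add: deg_eq_card_nbrs)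
  then show ?thesis using stationary_weight_mul_mean_Wmat_diag[OF u] by (simp add: algebra_simps)
qed

subsection \<open>Expectation of the consensus value\<close>

definition "round_entries k = {k} \<times> N \<times> N"

lemma Wmat_observe:
  assumes "v \<in> N" "u \<in> N"
  shows "Wmat n At k \<omega> v u = Wmat n (sample_of (observe (round_entries k) \<omega>)) k () v u"
  unfolding Wmat_def rand_deg_def sample_of_def observe_def round_entries_def using assms
  by (auto intro!: sum.cong arg_cong2[where f="(/)"])

lemma Wmat_sample_of_measurable:
  assumes "v \<in> N" "u \<in> N"
  shows "(\<lambda>f. Wmat n (sample_of f) k () v u) \<in> borel_measurable (PiM (round_entries k) (\<lambda>_. borel))"
proof -
  have "(k, w, v) \<in> round_entries k" if "w \<in> N" for w
    using that assms unfolding round_entries_def by auto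
  then show ?thesis
    unfolding Wmat_def rand_deg_def sample_of_def using assms by measurable
qed

lemma indep_Wmat_state:
  assumes "v \<in> N" "u \<in> N"
  shows "indep_var borel (\<lambda>\<omega>. Wmat n At (Suc k) \<omega> v u) borel (\<lambda>\<omega>. state k \<omega> u)"
proof -
  have "round_entries (Suc k) \<inter> history k = {}" "round_entries (Suc k) \<subseteq> entries"
    unfolding round_entries_def history_def by auto
  from indep_var_observe[OF this history_subset_entries Wmat_sample_of_measurable[OF assms]
      cstate_sample_of_measurable[OF order.refl assms(2)]]
  show ?thesis by (simp add: Wmat_observe[OF assms, symmetric] state_observe[OF order.refl assms(2), symmetric])
qed

lemma expectation_state_Suc:
  assumes v: "v \<in> N"
  shows "(\<integral>\<omega>. state (Suc k) \<omega> v \<partial>M) = (\<Sum>u\<in>N. mean_Wmat v u * (\<integral>\<omega>. state k \<omega> u \<partial>M))"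
proof -
  note product = indep_var_integrable indep_var_lebesgue_integral
  note product_u = product[OF indep_Wmat_state[OF v] integrable_Wmat[of "Suc k" v] integrable_state]
  have "(\<integral>\<omega>. state (Suc k) \<omega> v \<partial>M) = (\<Sum>u\<in>N. \<integral>\<omega>. Wmat n At (Suc k) \<omega> v u * state k \<omega> u \<partial>M)"
    using v product_u by (simp del: cstate.simps add: state_Suc integral_sum)
  also have "\<dots> = (\<Sum>u\<in>N. mean_Wmat v u * (\<integral>\<omega>. state k \<omega> u \<partial>M))"
    using v product_u expectation_Wmat[of "Suc k" v] by (intro sum.cong) auto
  finally show ?thesis .
qed

definition "weighted_state k \<omega> = (\<Sum>v\<in>N. stationary_weight v * state k \<omega> v)"

lemma expectation_weighted_state:
  "(\<integral>\<omega>. weighted_state k \<omega> \<partial>M) = (\<Sum>v\<in>N. stationary_weight v * x0 v)"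
proof (induction k)
  case 0
  then show ?case by (simp add: weighted_state_def prob_space)
next
  case (Suc k)
  have expectation: "(\<integral>\<omega>. weighted_state k \<omega> \<partial>M) = (\<Sum>v\<in>N. stationary_weight v * (\<integral>\<omega>. state k \<omega> v \<partial>M))"
    for k unfolding weighted_state_def using integrable_state by (simp add: integral_sum)
  have "(\<integral>\<omega>. weighted_state (Suc k) \<omega> \<partial>M)
      = (\<Sum>v\<in>N. stationary_weight v * (\<Sum>u\<in>N. mean_Wmat v u * (\<integral>\<omega>. state k \<omega> u \<partial>M)))"
    unfolding expectation by (intro sum.cong) (simp_all del: cstate.simps add: expectation_state_Suc)
  also have "\<dots> = (\<Sum>u\<in>N. (\<Sum>v\<in>N. stationary_weight v * mean_Wmat v u) * (\<integral>\<omega>. state k \<omega> u \<partial>M))"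
    by (simp add: sum_distrib_left sum_distrib_right mult.assoc) (rule sum.swap)
  also have "\<dots> = (\<integral>\<omega>. weighted_state k \<omega> \<partial>M)"
    unfolding expectation
  proof (rule sum.cong[OF refl])
    fix u assume "u \<in> N"
    then show "(\<Sum>v\<in>N. stationary_weight v * mean_Wmat v u) * (\<integral>\<omega>. state k \<omega> u \<partial>M)
        = stationary_weight u * (\<integral>\<omega>. state k \<omega> u \<partial>M)"
      by (simp only: stationary_weight_left_eigenvector)
  qed
  finally show ?case using Suc by simp
qed

lemma weighted_state_bound:
  "AE \<omega> in M. norm (weighted_state k \<omega>) \<le> (\<Sum>v\<in>N. \<bar>stationary_weight v\<bar>) * (\<Sum>j\<in>N. \<bar>x0 j\<bar>)"
proof (rule eventually_mono[OF AE_good])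
  fix \<omega> assume good: "\<omega> \<in> good"
  have "norm (weighted_state k \<omega>) \<le> (\<Sum>v\<in>N. \<bar>stationary_weight v\<bar> * \<bar>state k \<omega> v\<bar>)"
    unfolding weighted_state_def real_norm_def by (rule order.trans[OF sum_abs]) (simp add: abs_mult)
  also have "\<dots> \<le> (\<Sum>v\<in>N. \<bar>stationary_weight v\<bar> * (\<Sum>j\<in>N. \<bar>x0 j\<bar>))"
    by (intro sum_mono mult_left_mono state_abs_bound[OF good]) auto
  finally show "norm (weighted_state k \<omega>) \<le> (\<Sum>v\<in>N. \<bar>stationary_weight v\<bar>) * (\<Sum>j\<in>N. \<bar>x0 j\<bar>)"
    by (simp add: sum_distrib_right)
qed

lemma AE_weighted_state_tendsto_consensus: "AE \<omega> in M. (\<lambda>k. weighted_state k \<omega>) \<longlonglongrightarrow> consensus \<omega>"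
  using AE_state_tendsto_consensus
proof (rule eventually_mono)
  fix \<omega> assume "\<forall>i\<in>N. (\<lambda>k. state k \<omega> i) \<longlonglongrightarrow> consensus \<omega>"
  then have "(\<lambda>k. weighted_state k \<omega>) \<longlonglongrightarrow> (\<Sum>v\<in>N. stationary_weight v * consensus \<omega>)"
    unfolding weighted_state_def by (intro tendsto_sum tendsto_mult tendsto_const) auto
  then show "(\<lambda>k. weighted_state k \<omega>) \<longlonglongrightarrow> consensus \<omega>"
    using sum_stationary_weight by (simp add: sum_distrib_right[symmetric])
qed

lemma weighted_state_measurable[measurable]: "weighted_state k \<in> borel_measurable M"
  unfolding weighted_state_def by measurable

lemma integrable_consensus: "integrable M consensus"
  by (rule integrable_dominated_convergence[OF consensus_measurable weighted_state_measurable
        integrable_const AE_weighted_state_tendsto_consensus weighted_state_bound])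

lemma expectation_consensus:
  "(\<integral>\<omega>. consensus \<omega> \<partial>M) = (\<Sum>i\<in>N. rho n E p * weight n E p i * x0 i)"
proof -
  have "(\<lambda>k. \<integral>\<omega>. weighted_state k \<omega> \<partial>M) \<longlonglongrightarrow> (\<integral>\<omega>. consensus \<omega> \<partial>M)"
    by (rule integral_dominated_convergence[OF consensus_measurable weighted_state_measurable
          integrable_const AE_weighted_state_tendsto_consensus weighted_state_bound])
  then have "(\<integral>\<omega>. consensus \<omega> \<partial>M) = (\<Sum>v\<in>N. stationary_weight v * x0 v)"
    unfolding expectation_weighted_state by (rule LIMSEQ_unique[OF _ tendsto_const])
  then show ?thesis by (simp add: stationary_weight_def)
qed

end

theorem theorem1:
  fixes M :: "'a measure" and n :: nat and E :: "nat \<Rightarrow> nat \<Rightarrow> bool"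
    and p :: "nat \<Rightarrow> real" and At :: "nat \<Rightarrow> nat \<Rightarrow> nat \<Rightarrow> 'a \<Rightarrow> real"
    and x0 :: "nat \<Rightarrow> real"
  assumes "prob_space M"
    and "n \<ge> 2"
    and sym: "\<forall>u\<in>{1..n}. \<forall>v\<in>{1..n}. E u v = E v u"
    and noloop: "\<forall>v. \<not> E v v"
    and conn: "connected_graph n E"
    and degpos: "\<forall>v\<in>{1..n}. deg n E v \<ge> 1"
    and prange: "\<forall>v\<in>{1..n}. 0 < p v \<and> p v < 1"
    and indep: "prob_space.indep_vars M (\<lambda>_. borel) (\<lambda>(k, u, v). At k u v)
                  {(k, u, v). k \<ge> 1 \<and> u \<in> {1..n} \<and> v \<in> {1..n}}"
    and dist_edge: "\<forall>k\<ge>1. \<forall>u\<in>{1..n}. \<forall>v\<in>{1..n}. E u v \<longrightarrow>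
                  measure M {\<omega> \<in> space M. At k u v \<omega> = adj E u v} = p v \<and>
                  measure M {\<omega> \<in> space M. At k u v \<omega> = 0} = 1 - p v"
    and dist_nonedge: "\<forall>k\<ge>1. \<forall>u\<in>{1..n}. \<forall>v\<in>{1..n}. \<not> E u v \<longrightarrow>
                  measure M {\<omega> \<in> space M. At k u v \<omega> = 0} = 1"
  shows "\<exists>xs. xs \<in> borel_measurable M \<and>
           (AE \<omega> in M. \<forall>i\<in>{1..n}. (\<lambda>k. cstate n At x0 k \<omega> i) \<longlonglongrightarrow> xs \<omega>) \<and>
           integrable M xs \<and>
           (\<integral>\<omega>. xs \<omega> \<partial>M) = (\<Sum>i\<in>{1..n}. rho n E p * weight n E p i * x0 i)"
proof -
  interpret random_consensus M n E p At x0
    using assms unfolding random_consensus_def random_consensus_axioms_def by auto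
  show ?thesis
    using consensus_measurable AE_state_tendsto_consensus integrable_consensus expectation_consensus
    by blast
qed

end
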